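(* Let $f$ be a Moufang permutation on an abelian group $(X,+)$ with associated biadditive mapping $\beta$. Then $(f^3,\beta)$ is a construction pair on $(X,+)$.
   Context: A permutation $f$ of an abelian group $(X,+)$ is a Moufang permutation if the map $\beta(x,y)=f^{-1}(f(x)+f(y))-x-y$ (P1) is symmetric, alternating ($\beta(x,x)=0$) and biadditive, and for all $x,y,z\in X$: (P2) $\beta(\beta(x,y),z)=0$ and (P3) $\beta(f(x),f(y))=f(\beta(f^3(x),y))$; $\beta$ is the associated biadditive mapping. A construction pair on $(X,+)$ is a pair $(g,\gamma)$ where $g$ is a permutation of $X$ and $\gamma:X\times X\to X$ is symmetric, alternating and biadditive, such that for all $x,y,z\in X$: (C1) $g^{-1}(g(x)+g(y))=x+y+\gamma(x,y)+g^{-1}(\gamma(x,y))+g^{-2}(\gamma(x,y))$; (C2) $\gamma(\gamma(x,y),z)=0$; (C3) $g^{-1}(\gamma(x,y))=\gamma(g(x),y)$. *)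

theory Defs
  imports Main
begin

definition symmetric_map :: "('a \<Rightarrow> 'a \<Rightarrow> 'a) \<Rightarrow> bool" where
  "symmetric_map b \<longleftrightarrow> (\<forall>x y. b x y = b y x)"

definition alternating_map :: "('a::ab_group_add \<Rightarrow> 'a \<Rightarrow> 'a) \<Rightarrow> bool" where
  "alternating_map b \<longleftrightarrow> (\<forall>x. b x x = 0)"

definition biadditive :: "('a::ab_group_add \<Rightarrow> 'a \<Rightarrow> 'a) \<Rightarrow> bool" where
  "biadditive b \<longleftrightarrow> (\<forall>x y z. b (x + y) z = b x z + b y z) \<and> (\<forall>x y z. b x (y + z) = b x y + b x z)"

definition assoc_beta :: "('a::ab_group_add \<Rightarrow> 'a) \<Rightarrow> 'a \<Rightarrow> 'a \<Rightarrow> 'a" where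
  "assoc_beta f x y = inv f (f x + f y) - x - y"

definition moufang_permutation :: "('a::ab_group_add \<Rightarrow> 'a) \<Rightarrow> bool" where
  "moufang_permutation f \<longleftrightarrow> bij f \<and>
     (let \<beta> = assoc_beta f in
        symmetric_map \<beta> \<and> alternating_map \<beta> \<and> biadditive \<beta> \<and>
        (\<forall>x y z. \<beta> (\<beta> x y) z = 0) \<and>
        (\<forall>x y. \<beta> (f x) (f y) = f (\<beta> ((f ^^ 3) x) y)))"

definition construction_pair :: "('a::ab_group_add \<Rightarrow> 'a) \<Rightarrow> ('a \<Rightarrow> 'a \<Rightarrow> 'a) \<Rightarrow> bool" where
  "construction_pair g \<gamma> \<longleftrightarrow> bij g \<and>
     symmetric_map \<gamma> \<and> alternating_map \<gamma> \<and> biadditive \<gamma> \<and>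
     (\<forall>x y. inv g (g x + g y) = x + y + \<gamma> x y + inv g (\<gamma> x y) + inv g (inv g (\<gamma> x y))) \<and>
     (\<forall>x y z. \<gamma> (\<gamma> x y) z = 0) \<and>
     (\<forall>x y. inv g (\<gamma> x y) = \<gamma> (g x) y)"

end

theory Submission
  imports Defs
begin

text \<open>
  Write \<open>F = inv f\<close> and \<open>c = \<beta> x y\<close>. Property (P3) gives
  \<open>F (\<beta> x y) = \<beta> (f\<^sup>2 x) (F y)\<close>, so every \<open>F\<^sup>n c\<close> is again a value of \<open>\<beta>\<close>; since
  \<open>\<beta>\<close> kills its own values (P2), \<open>F\<close> is additive on sums \<open>s + F\<^sup>n c\<close>. Inverting
  \<open>f\<^sup>3 x + f\<^sup>3 y\<close> one \<open>F\<close> at a time then produces one new \<open>\<beta>\<close>-term per step, which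
  gives (C1); (C3) is \<open>F\<^sup>3 c = \<beta> (f\<^sup>6 x) (F\<^sup>3 y)\<close> together with the symmetry
  \<open>\<beta> (f\<^sup>3 x) y = \<beta> x (f\<^sup>3 y)\<close>, again a consequence of (P3).
\<close>

locale moufang =
  fixes f :: "'a::ab_group_add \<Rightarrow> 'a"
  assumes moufang_permutation: "moufang_permutation f"
begin

abbreviation \<beta> :: "'a \<Rightarrow> 'a \<Rightarrow> 'a" where
  "\<beta> \<equiv> assoc_beta f"

lemma bij: "bij f"
  using moufang_permutation by (simp add: moufang_permutation_def)

lemma f_inv_f [simp]: "f (inv f y) = y"
  using bij by (simp add: bij_is_surj surj_f_inv_f)

lemma inv_f_f [simp]: "inv f (f y) = y"
  using bij by (simp add: bij_is_inj)

lemma symmetric_map_beta: "symmetric_map \<beta>"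
  and alternating_map_beta: "alternating_map \<beta>"
  and biadditive_beta: "biadditive \<beta>"
  and beta_beta_left: "\<beta> (\<beta> x y) z = 0"
  and beta_f_f: "\<beta> (f x) (f y) = f (\<beta> ((f ^^ 3) x) y)"
  using moufang_permutation by (simp_all add: moufang_permutation_def Let_def)

lemma beta_commute: "\<beta> x y = \<beta> y x"
  using symmetric_map_beta by (simp add: symmetric_map_def)

lemma beta_beta_right: "\<beta> z (\<beta> x y) = 0"
  by (metis beta_commute beta_beta_left)

lemma inv_add_image: "inv f (f a + f b) = a + b + \<beta> a b"
  by (simp add: assoc_beta_def)

lemma inv_add: "inv f (p + q) = inv f p + inv f q + \<beta> (inv f p) (inv f q)"
  using inv_add_image [of "inv f p" "inv f q"] by simp

lemma inv_beta: "inv f (\<beta> x y) = \<beta> (f (f x)) (inv f y)"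
proof -
  have "\<beta> x y = f (\<beta> (f (f x)) (inv f y))"
    using beta_f_f [of "inv f x" "inv f y"] by (simp add: numeral_3_eq_3)
  then show ?thesis
    by (metis inv_f_f)
qed

lemma inv_funpow_beta: "(inv f ^^ n) (\<beta> x y) = \<beta> ((f ^^ (2 * n)) x) ((inv f ^^ n) y)"
  by (induction n) (simp_all add: inv_beta funpow_swap1)

lemma inv_add_inv_funpow_beta:
  "inv f (s + (inv f ^^ n) (\<beta> u v)) = inv f s + (inv f ^^ Suc n) (\<beta> u v)"
proof -
  have "(inv f ^^ Suc n) (\<beta> u v) = \<beta> ((f ^^ (2 * Suc n)) u) ((inv f ^^ Suc n) v)"
    by (rule inv_funpow_beta)
  then have "\<beta> (inv f s) ((inv f ^^ Suc n) (\<beta> u v)) = 0"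
    by (simp only: beta_beta_right)
  then show ?thesis
    by (simp add: inv_add)
qed

lemma beta_funpow3_commute: "\<beta> ((f ^^ 3) x) y = \<beta> x ((f ^^ 3) y)"
proof -
  have "f (\<beta> ((f ^^ 3) x) y) = f (\<beta> ((f ^^ 3) y) x)"
    using beta_f_f [of x y] beta_f_f [of y x] by (simp add: beta_commute)
  then show ?thesis
    by (metis inv_f_f beta_commute)
qed

lemma inv_funpow3_beta: "(inv f ^^ 3) (\<beta> x y) = \<beta> ((f ^^ 3) x) y"
proof -
  have "(inv f ^^ 3) (\<beta> x y) = \<beta> ((f ^^ 3) ((f ^^ 3) x)) ((inv f ^^ 3) y)"
    by (simp add: inv_funpow_beta funpow_add [symmetric, THEN fun_cong, simplified])
  also have "\<dots> = \<beta> ((f ^^ 3) x) ((f ^^ 3) ((inv f ^^ 3) y))"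
    by (rule beta_funpow3_commute)
  also have "\<dots> = \<beta> ((f ^^ 3) x) y"
    using fn_o_inv_fn_is_id [OF bij, of 3] by (simp add: fun_eq_iff)
  finally show ?thesis .
qed

lemma beta_f_f_eq_inv_funpow2: "\<beta> (f a) (f b) = (inv f ^^ 2) (\<beta> a b)"
proof -
  have "\<beta> (f a) (f b) = f ((inv f ^^ 3) (\<beta> a b))"
    by (simp add: beta_f_f inv_funpow3_beta)
  then show ?thesis
    by (simp add: numeral_3_eq_3 numeral_2_eq_2)
qed

lemma beta_funpow_funpow: "\<beta> ((f ^^ n) a) ((f ^^ n) b) = (inv f ^^ (2 * n)) (\<beta> a b)"
proof (induction n)
  case (Suc n)
  have "\<beta> ((f ^^ Suc n) a) ((f ^^ Suc n) b) = (inv f ^^ 2) (\<beta> ((f ^^ n) a) ((f ^^ n) b))"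
    using beta_f_f_eq_inv_funpow2 by simp
  with Suc.IH show ?case
    by (simp add: funpow_add [symmetric, THEN fun_cong, simplified])
qed simp

lemma inv_funpow3_add_funpow3:
  "(inv f ^^ 3) ((f ^^ 3) x + (f ^^ 3) y) =
    x + y + \<beta> x y + (inv f ^^ 3) (\<beta> x y) + (inv f ^^ 6) (\<beta> x y)"
proof -
  let ?c = "\<beta> x y"
  have step: "inv f ((f ^^ Suc k) x + (f ^^ Suc k) y) =
      (f ^^ k) x + (f ^^ k) y + (inv f ^^ (2 * k)) ?c" for k
    using inv_add_image [of "(f ^^ k) x" "(f ^^ k) y"] by (simp add: beta_funpow_funpow)
  have "(inv f ^^ 3) ((f ^^ 3) x + (f ^^ 3) y) = inv f (inv f (inv f ((f ^^ 3) x + (f ^^ 3) y)))"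
    by (simp add: numeral_3_eq_3)
  also have "\<dots> = inv f (inv f ((f ^^ 2) x + (f ^^ 2) y + (inv f ^^ 4) ?c))"
    using step [of 2] by simp
  also have "\<dots> = inv f (inv f ((f ^^ 2) x + (f ^^ 2) y) + (inv f ^^ 5) ?c)"
    using inv_add_inv_funpow_beta [of _ 4] by simp
  also have "\<dots> = inv f (f x + f y + (inv f ^^ 2) ?c + (inv f ^^ 5) ?c)"
    using step [of 1] by (simp add: numeral_2_eq_2)
  also have "\<dots> = inv f (f x + f y + (inv f ^^ 2) ?c) + (inv f ^^ 6) ?c"
    using inv_add_inv_funpow_beta [of _ 5] by simp
  also have "\<dots> = inv f (f x + f y) + (inv f ^^ 3) ?c + (inv f ^^ 6) ?c"
    using inv_add_inv_funpow_beta [of _ 2] by simp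
  also have "\<dots> = x + y + ?c + (inv f ^^ 3) ?c + (inv f ^^ 6) ?c"
    using step [of 0] by simp
  finally show ?thesis .
qed

end

theorem mainTheorem14:
  fixes f :: "'a::ab_group_add \<Rightarrow> 'a"
  assumes "moufang_permutation f"
  shows "construction_pair (f ^^ 3) (assoc_beta f)"
proof -
  interpret moufang f
    using assms by unfold_locales
  have inv_funpow3: "inv (f ^^ 3) = inv f ^^ 3"
    by (rule inv_fn [OF bij])
  have C1: "inv (f ^^ 3) ((f ^^ 3) x + (f ^^ 3) y) =
      x + y + \<beta> x y + inv (f ^^ 3) (\<beta> x y) + inv (f ^^ 3) (inv (f ^^ 3) (\<beta> x y))" for x y
    by (simp add: inv_funpow3 inv_funpow3_add_funpow3 funpow_add [symmetric, THEN fun_cong, simplified])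
  have C3: "inv (f ^^ 3) (\<beta> x y) = \<beta> ((f ^^ 3) x) y" for x y
    by (simp add: inv_funpow3 inv_funpow3_beta)
  show ?thesis
    unfolding construction_pair_def
    using bij symmetric_map_beta alternating_map_beta biadditive_beta beta_beta_left C1 C3
    by simp
qed

end
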